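(* Consider the projected pseudo-gradient descent algorithm described below, with accuracy parameter $\epsilon \in (0,1)$. In every descent step $t$, the computed pseudo-gradient $\widehat G$ equals the exact gradient (with respect to $\beta$, at $\beta = \beta^{(t)}$) of $F(\beta, X^{(t)})$ for some labeled point set $X^{(t)}$ that is an $\epsilon$-perturbation of $X$ (with the same labels).
   Context: Setting: $X = \{x_1,\dots,x_N\}$ is the set of rows of a design matrix $J = T_1\Join\cdots\Join T_m$, each row a point in $[-1,1]^d$ with label $y_i \in\{-1,1\}$; $\lambda>0$. For a labeled point set $X$, $F(\beta, X) = \frac{1}{N}\sum_i \max(0,1-y_i\beta\cdot x_i) + \lambda\|\beta\|_2^2$, with gradient $\nabla_\beta F(\beta,X) = 2\lambda\beta - \frac{1}{N}\sum_{i:\ 1-y_i\beta\cdot x_i\ge 0} y_i x_i$. For a vector $v$, $|v|$ denotes the vector of entrywise absolute values. A point $p$ is an $\epsilon$-perturbation of $q$ if $p_j = c_j q_j$ with $c_j \in [1-\epsilon,1+\epsilon]$ for every coordinate $j$; a point set $X_a$ is an $\epsilon$-perturbation of $X_b$ if there is a label-preserving bijection mapping each point to an $\epsilon$-perturbation of it. For $j\in[d]$, $D(j)$ is the set of values occurring in column $j$. Pseudo-gradient at $\beta^{(t)}$: (1) For each $j\in[d]$, $v \in D(j)$, compute a $(1+\epsilon)$-approximation $\widehat C^-_{j,v}$ (i.e. $C/(1+\epsilon)\le \widehat C\le(1+\epsilon)C$) of $C^-_{j,v}$, the number of rows $x$ with label $-1$, value $v$ in column $j$, and $1+\beta^{(t)}\cdot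 x \ge \epsilon|\beta^{(t)}|\cdot|x|$. (2) Similarly $\widehat C^+_{j,v}$ approximates $C^+_{j,v}$, the number of rows with label $+1$, value $v$ in column $j$, and $1-\beta^{(t)}\cdot x\ge \epsilon|\beta^{(t)}|\cdot|x|$. (3) $\widehat G^-_k = \sum_{v\in D(k),v<0} v\widehat C^-_{k,v} - \sum_{v\in D(k), v\ge 0} v\widehat C^+_{k,v}$. (4) $\widehat G^+_k = \sum_{v\in D(k),v\ge0} v\widehat C^-_{k,v} - \sum_{v\in D(k),v<0} v\widehat C^+_{k,v}$. (5) $\widehat G = \frac{\widehat G^- + \widehat G^+}{N} + 2\lambda\beta^{(t)}$. Descent: $\beta^{(0)}=0$, $\beta^{(t+1)} = \Pi_{\mathcal K}(\beta^{(t)} - \eta_{t+1}\widehat G)$ with $\eta_t = \frac{1}{\lambda\sqrt{dt}}$ and $\mathcal K$ the ball of radius $\frac{\sqrt d}{2\lambda}$ centered at the origin. *)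

theory Defs
  imports "HOL-Analysis.Analysis"
begin

text \<open>A labeled point set with N points is an indexed family x :: nat => real^'d
  (points x 0, ..., x (N-1)) together with labels y :: nat => real in {-1,1}.\<close>

definition svm_F :: "real \<Rightarrow> nat \<Rightarrow> (nat \<Rightarrow> real^'d) \<Rightarrow> (nat \<Rightarrow> real) \<Rightarrow> real^'d \<Rightarrow> real" where
  "svm_F lam N x y \<beta> =
     (1 / real N) * (\<Sum>i<N. max 0 (1 - y i * (\<beta> \<bullet> x i))) + lam * (norm \<beta>)\<^sup>2"

definition svm_grad :: "real \<Rightarrow> nat \<Rightarrow> (nat \<Rightarrow> real^'d) \<Rightarrow> (nat \<Rightarrow> real) \<Rightarrow> real^'d \<Rightarrow> real^'d" where
  "svm_grad lam N x y \<beta> =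
     (2 * lam) *\<^sub>R \<beta> - (1 / real N) *\<^sub>R (\<Sum>i\<in>{i. i < N \<and> 1 - y i * (\<beta> \<bullet> x i) \<ge> 0}. y i *\<^sub>R x i)"

definition perturb_pt :: "real \<Rightarrow> real^'d \<Rightarrow> real^'d \<Rightarrow> bool" where
  "perturb_pt \<epsilon> p q \<longleftrightarrow> (\<forall>j. \<exists>c. 1 - \<epsilon> \<le> c \<and> c \<le> 1 + \<epsilon> \<and> p $ j = c * q $ j)"

definition perturbation :: "real \<Rightarrow> nat \<Rightarrow> (nat \<Rightarrow> real^'d) \<Rightarrow> (nat \<Rightarrow> real)
     \<Rightarrow> (nat \<Rightarrow> real^'d) \<Rightarrow> (nat \<Rightarrow> real) \<Rightarrow> bool" where
  "perturbation \<epsilon> N x' y' x y \<longleftrightarrow>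
     (\<exists>\<sigma>. bij_betw \<sigma> {..<N} {..<N} \<and>
        (\<forall>i<N. y' (\<sigma> i) = y i \<and> perturb_pt \<epsilon> (x' (\<sigma> i)) (x i)))"

definition col_vals :: "nat \<Rightarrow> (nat \<Rightarrow> real^'d) \<Rightarrow> 'd \<Rightarrow> real set" where
  "col_vals N x j = {x i $ j | i. i < N}"

definition abs_dot :: "real^'d \<Rightarrow> real^'d \<Rightarrow> real" where
  "abs_dot b p = (\<Sum>k\<in>UNIV. \<bar>b $ k\<bar> * \<bar>p $ k\<bar>)"

definition C_minus :: "real \<Rightarrow> nat \<Rightarrow> (nat \<Rightarrow> real^'d) \<Rightarrow> (nat \<Rightarrow> real) \<Rightarrow> real^'d \<Rightarrow> 'd \<Rightarrow> real \<Rightarrow> nat" where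
  "C_minus \<epsilon> N x y \<beta> j v = card {i. i < N \<and> y i = -1 \<and> x i $ j = v \<and>
       1 + \<beta> \<bullet> x i \<ge> \<epsilon> * abs_dot \<beta> (x i)}"

definition C_plus :: "real \<Rightarrow> nat \<Rightarrow> (nat \<Rightarrow> real^'d) \<Rightarrow> (nat \<Rightarrow> real) \<Rightarrow> real^'d \<Rightarrow> 'd \<Rightarrow> real \<Rightarrow> nat" where
  "C_plus \<epsilon> N x y \<beta> j v = card {i. i < N \<and> y i = 1 \<and> x i $ j = v \<and>
       1 - \<beta> \<bullet> x i \<ge> \<epsilon> * abs_dot \<beta> (x i)}"

definition approx :: "real \<Rightarrow> real \<Rightarrow> real \<Rightarrow> bool" where
  "approx \<epsilon> Ch C \<longleftrightarrow> C / (1 + \<epsilon>) \<le> Ch \<and> Ch \<le> (1 + \<epsilon>) * C"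

definition G_minus :: "nat \<Rightarrow> (nat \<Rightarrow> real^'d) \<Rightarrow> ('d \<Rightarrow> real \<Rightarrow> real) \<Rightarrow> ('d \<Rightarrow> real \<Rightarrow> real) \<Rightarrow> 'd \<Rightarrow> real" where
  "G_minus N x Chm Chp k =
     (\<Sum>v\<in>{v\<in>col_vals N x k. v < 0}. v * Chm k v) - (\<Sum>v\<in>{v\<in>col_vals N x k. v \<ge> 0}. v * Chp k v)"

definition G_plus :: "nat \<Rightarrow> (nat \<Rightarrow> real^'d) \<Rightarrow> ('d \<Rightarrow> real \<Rightarrow> real) \<Rightarrow> ('d \<Rightarrow> real \<Rightarrow> real) \<Rightarrow> 'd \<Rightarrow> real" where
  "G_plus N x Chm Chp k =
     (\<Sum>v\<in>{v\<in>col_vals N x k. v \<ge> 0}. v * Chm k v) - (\<Sum>v\<in>{v\<in>col_vals N x k. v < 0}. v * Chp k v)"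

definition pseudo_grad :: "real \<Rightarrow> nat \<Rightarrow> (nat \<Rightarrow> real^'d) \<Rightarrow> real^'d
     \<Rightarrow> ('d \<Rightarrow> real \<Rightarrow> real) \<Rightarrow> ('d \<Rightarrow> real \<Rightarrow> real) \<Rightarrow> real^'d" where
  "pseudo_grad lam N x \<beta> Chm Chp =
     (\<chi> k. (G_minus N x Chm Chp k + G_plus N x Chm Chp k) / real N + 2 * lam * \<beta> $ k)"

end

theory Submission
  imports Defs
begin

text \<open>Fix the iterate \<open>\<beta>\<close>. A point counted in some \<open>C\<^sup>\<plusminus>\<^sub>j\<^sub>,\<^sub>v\<close> satisfies
  \<open>1 - y \<beta>\<cdot>x \<ge> \<epsilon> |\<beta>|\<cdot>|x|\<close>, so it stays in the active region of the hinge loss under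
  every \<open>\<epsilon>\<close>-perturbation. Scaling its \<open>j\<close>-th coordinate by the ratio of estimated to exact
  count of its class (a factor in \<open>[1-\<epsilon>, 1+\<epsilon>]\<close>) makes each class contribute \<open>v\<close> times the
  estimate to the gradient, which is exactly the pseudo-gradient.
  Every other point has \<open>1 - y \<beta>\<cdot>x < \<epsilon> |\<beta>|\<cdot>|x|\<close>; scaling its coordinates by
  \<open>1 + \<epsilon> y sgn(\<beta>\<^sub>j x\<^sub>j)\<close> raises \<open>y \<beta>\<cdot>x\<close> by exactly \<open>\<epsilon> |\<beta>|\<cdot>|x|\<close>, pushing it out of
  the active region, so it does not contribute at all.\<close>

lemma finite_col_vals: "finite (col_vals N x j)"
  by (simp add: col_vals_def)

lemma inner_perturb_bound:
  fixes b p q :: "real^'d"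
  assumes "\<And>j. \<bar>p$j - q$j\<bar> \<le> \<epsilon> * \<bar>q$j\<bar>"
  shows "\<bar>b \<bullet> p - b \<bullet> q\<bar> \<le> \<epsilon> * abs_dot b q"
proof -
  have "b \<bullet> p - b \<bullet> q = (\<Sum>j\<in>UNIV. b$j * (p$j - q$j))"
    by (simp add: inner_vec_def sum_subtractf[symmetric] algebra_simps)
  also have "\<bar>\<dots>\<bar> \<le> (\<Sum>j\<in>UNIV. \<bar>b$j * (p$j - q$j)\<bar>)"
    by (rule sum_abs)
  also have "\<dots> \<le> (\<Sum>j\<in>UNIV. \<bar>b$j\<bar> * (\<epsilon> * \<bar>q$j\<bar>))"
    using assms by (intro sum_mono) (simp add: abs_mult mult_left_mono)
  finally show ?thesis
    by (simp add: abs_dot_def sum_distrib_left mult.left_commute)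
qed

lemma approx_ratio_bounds:
  assumes "0 \<le> \<epsilon>" "approx \<epsilon> Ch C" "0 < C"
  shows "1 - \<epsilon> \<le> Ch / C" "Ch / C \<le> 1 + \<epsilon>"
proof -
  have "(1 - \<epsilon>) * (1 + \<epsilon>) \<le> 1"
    by (simp add: algebra_simps)
  then have "(1 - \<epsilon>) * C \<le> C / (1 + \<epsilon>)"
    using assms by (simp add: pos_le_divide_eq mult.commute mult_left_mono mult.left_commute)
  also have "\<dots> \<le> Ch"
    using assms(2) by (simp add: approx_def)
  finally show "1 - \<epsilon> \<le> Ch / C"
    using assms(3) by (simp add: pos_le_divide_eq)
  show "Ch / C \<le> 1 + \<epsilon>"
    using assms by (simp add: approx_def pos_divide_le_eq)
qed

lemma approx_zero: "approx \<epsilon> Ch 0 \<Longrightarrow> Ch = 0"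
  by (simp add: approx_def)

lemma sum_rescaled_by_class:
  fixes f :: "'a \<Rightarrow> real"
  assumes "finite A" "finite V" "f ` A \<subseteq> V"
    and rescaled: "\<And>i. i \<in> A \<Longrightarrow> g i = h (f i) / card {i'\<in>A. f i' = f i} * f i"
    and empty_class: "\<And>v. v \<in> V \<Longrightarrow> {i\<in>A. f i = v} = {} \<Longrightarrow> h v = 0"
  shows "(\<Sum>i\<in>A. g i) = (\<Sum>v\<in>V. v * h v)"
proof -
  have "(\<Sum>i\<in>A. g i) = (\<Sum>v\<in>V. \<Sum>i\<in>{i\<in>A. f i = v}. g i)"
    using assms(1-3) by (rule sum.group[symmetric])
  also have "\<dots> = (\<Sum>v\<in>V. v * h v)"
  proof (rule sum.cong[OF refl])
    fix v assume "v \<in> V"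
    have "(\<Sum>i\<in>{i\<in>A. f i = v}. g i) = card {i\<in>A. f i = v} * (h v / card {i\<in>A. f i = v} * v)"
      using rescaled by simp
    also have "\<dots> = v * h v"
      using empty_class[OF \<open>v \<in> V\<close>] \<open>finite A\<close> by (cases "{i\<in>A. f i = v} = {}") auto
    finally show "(\<Sum>i\<in>{i\<in>A. f i = v}. g i) = v * h v" .
  qed
  finally show ?thesis .
qed

lemma G_minus_plus_eq:
  "G_minus N x Cm Cp k + G_plus N x Cm Cp k =
     (\<Sum>v\<in>col_vals N x k. v * Cm k v) - (\<Sum>v\<in>col_vals N x k. v * Cp k v)"
proof -
  have split: "(\<Sum>v\<in>col_vals N x k. f v) =
      (\<Sum>v\<in>{v\<in>col_vals N x k. v < 0}. f v) + (\<Sum>v\<in>{v\<in>col_vals N x k. v \<ge> 0}. f v)"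
    for f :: "real \<Rightarrow> real"
    using sum.Int_Diff[OF finite_col_vals, of f N x k "{v. v < 0}"]
    by (simp add: Int_def set_diff_eq not_less)
  show ?thesis
    using split[of "\<lambda>v. v * Cm k v"] split[of "\<lambda>v. v * Cp k v"]
    by (simp add: G_minus_def G_plus_def)
qed

locale pseudo_gradient_step =
  fixes \<epsilon> :: real and N :: nat and x :: "nat \<Rightarrow> real^'d" and y :: "nat \<Rightarrow> real"
    and b :: "real^'d" and Cm Cp :: "'d \<Rightarrow> real \<Rightarrow> real"
  assumes eps_nonneg: "0 \<le> \<epsilon>"
    and labels: "\<forall>i<N. y i = -1 \<or> y i = 1"
    and approx_minus: "\<forall>j v. v \<in> col_vals N x j \<longrightarrow> approx \<epsilon> (Cm j v) (real (C_minus \<epsilon> N x y b j v))"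
    and approx_plus: "\<forall>j v. v \<in> col_vals N x j \<longrightarrow> approx \<epsilon> (Cp j v) (real (C_plus \<epsilon> N x y b j v))"
begin

definition robustly_active :: "nat \<Rightarrow> bool" where
  "robustly_active i \<longleftrightarrow> \<epsilon> * abs_dot b (x i) \<le> 1 - y i * (b \<bullet> x i)"

definition robust_class :: "real \<Rightarrow> nat set" where
  "robust_class s = {i. i < N \<and> y i = s \<and> robustly_active i}"

definition class_count :: "real \<Rightarrow> 'd \<Rightarrow> real \<Rightarrow> nat" where
  "class_count s j v = card {i \<in> robust_class s. x i $ j = v}"

text \<open>Labels are \<open>\<plusminus>1\<close>: \<open>C_minus\<close> and \<open>C_plus\<close> are \<open>class_count (-1)\<close> and
  \<open>class_count 1\<close>, estimated by \<open>Cm\<close> and \<open>Cp\<close>.\<close>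

definition class_estimate :: "real \<Rightarrow> 'd \<Rightarrow> real \<Rightarrow> real" where
  "class_estimate s j v = (if s = -1 then Cm j v else Cp j v)"

definition scale :: "nat \<Rightarrow> 'd \<Rightarrow> real" where
  "scale i j =
     (if robustly_active i
      then class_estimate (y i) j (x i $ j) / class_count (y i) j (x i $ j)
      else 1 + y i * \<epsilon> * sgn (b $ j * x i $ j))"

definition perturbed :: "nat \<Rightarrow> real^'d" where
  "perturbed i = (\<chi> j. scale i j * x i $ j)"

lemma finite_robust_class: "finite (robust_class s)"
  by (simp add: robust_class_def)

lemma approx_class_estimate:
  assumes "s = -1 \<or> s = 1" "v \<in> col_vals N x j"
  shows "approx \<epsilon> (class_estimate s j v) (class_count s j v)"
proof -
  have "C_minus \<epsilon> N x y b j v = class_count (-1) j v" "C_plus \<epsilon> N x y b j v = class_count 1 j v"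
    by (auto simp: C_minus_def C_plus_def class_count_def robust_class_def robustly_active_def
        intro!: arg_cong[where f = card])
  then show ?thesis
    using assms(1) approx_minus[rule_format, OF assms(2)] approx_plus[rule_format, OF assms(2)]
    by (auto simp: class_estimate_def)
qed

lemma scale_bounds:
  assumes "i < N"
  shows "1 - \<epsilon> \<le> scale i j \<and> scale i j \<le> 1 + \<epsilon>"
proof (cases "robustly_active i")
  case True
  have "i \<in> {i' \<in> robust_class (y i). x i' $ j = x i $ j}"
    using True assms by (simp add: robust_class_def)
  then have "0 < real (class_count (y i) j (x i $ j))"
    unfolding class_count_def using finite_robust_class by (auto simp: card_gt_0_iff)
  moreover have "approx \<epsilon> (class_estimate (y i) j (x i $ j)) (class_count (y i) j (x i $ j))"
    using assms labels by (intro approx_class_estimate) (auto simp: col_vals_def)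
  ultimately show ?thesis
    using True approx_ratio_bounds[OF eps_nonneg] by (simp add: scale_def)
next
  case False
  have "y i = -1 \<or> y i = 1" "sgn (b$j * x i $ j) \<in> {-1, 0, 1}"
    using labels assms by (auto simp: sgn_real_def)
  then show ?thesis
    using False eps_nonneg by (auto simp: scale_def)
qed

lemma perturbation_perturbed: "perturbation \<epsilon> N perturbed y x y"
  unfolding perturbation_def perturb_pt_def
proof (intro exI[of _ id] conjI allI impI)
  fix i j assume "i < N"
  then show "\<exists>c. 1 - \<epsilon> \<le> c \<and> c \<le> 1 + \<epsilon> \<and> perturbed (id i) $ j = c * x i $ j"
    using scale_bounds by (auto simp: perturbed_def)
qed simp_all

lemma perturbed_active_if_robustly_active:
  assumes "i < N" "robustly_active i"
  shows "0 \<le> 1 - y i * (b \<bullet> perturbed i)"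
proof -
  have "\<bar>perturbed i $ j - x i $ j\<bar> \<le> \<epsilon> * \<bar>x i $ j\<bar>" for j
  proof -
    have "\<bar>perturbed i $ j - x i $ j\<bar> = \<bar>scale i j - 1\<bar> * \<bar>x i $ j\<bar>"
      by (simp add: perturbed_def abs_mult[symmetric] algebra_simps)
    also have "\<dots> \<le> \<epsilon> * \<bar>x i $ j\<bar>"
      using scale_bounds[OF assms(1), of j] by (intro mult_right_mono) auto
    finally show ?thesis .
  qed
  then have "\<bar>b \<bullet> perturbed i - b \<bullet> x i\<bar> \<le> \<epsilon> * abs_dot b (x i)"
    by (rule inner_perturb_bound)
  moreover have "y i = -1 \<or> y i = 1"
    using labels assms by blast
  ultimately show ?thesis
    using assms(2) by (auto simp: robustly_active_def abs_le_iff)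
qed

lemma perturbed_inactive_if_not_robustly_active:
  assumes "i < N" "\<not> robustly_active i"
  shows "1 - y i * (b \<bullet> perturbed i) < 0"
proof -
  have yy: "y i * y i = 1"
    using labels assms by auto
  have "y i * (b \<bullet> perturbed i) =
      (\<Sum>j\<in>UNIV. y i * (b$j * x i $ j) + \<epsilon> * (y i * y i) * \<bar>b$j * x i $ j\<bar>)"
    using assms(2) by (simp add: perturbed_def scale_def inner_vec_def sum_distrib_left
        algebra_simps abs_sgn)
  also have "\<dots> = y i * (b \<bullet> x i) + \<epsilon> * abs_dot b (x i)"
    by (simp add: yy sum.distrib inner_vec_def sum_distrib_left abs_dot_def abs_mult)
  finally show ?thesis
    using assms(2) by (simp add: robustly_active_def)
qed

lemma active_set_perturbed:
  "{i. i < N \<and> 0 \<le> 1 - y i * (b \<bullet> perturbed i)} = robust_class 1 \<union> robust_class (-1)"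
  using perturbed_active_if_robustly_active perturbed_inactive_if_not_robustly_active labels
  by (force simp: robust_class_def)

lemma sum_robust_class_perturbed:
  assumes "s = -1 \<or> s = 1"
  shows "(\<Sum>i\<in>robust_class s. perturbed i $ k) = (\<Sum>v\<in>col_vals N x k. v * class_estimate s k v)"
proof (rule sum_rescaled_by_class[OF finite_robust_class finite_col_vals])
  show "(\<lambda>i. x i $ k) ` robust_class s \<subseteq> col_vals N x k"
    by (auto simp: robust_class_def col_vals_def)
  show "perturbed i $ k = class_estimate s k (x i $ k) /
          card {i' \<in> robust_class s. x i' $ k = x i $ k} * x i $ k"
    if "i \<in> robust_class s" for i
    using that by (simp add: robust_class_def perturbed_def scale_def class_count_def)
  show "class_estimate s k v = 0"
    if "v \<in> col_vals N x k" "{i \<in> robust_class s. x i $ k = v} = {}" for v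
    using approx_class_estimate[OF assms that(1)] that(2)
    by (simp add: class_count_def approx_zero)
qed

theorem pseudo_grad_eq_svm_grad_perturbed:
  "pseudo_grad lam N x b Cm Cp = svm_grad lam N perturbed y b"
proof (rule vec_eq_iff[THEN iffD2], intro allI)
  fix k
  let ?S = "\<lambda>s. \<Sum>i\<in>robust_class s. perturbed i $ k"
  have "robust_class 1 \<inter> robust_class (-1) = {}"
    by (auto simp: robust_class_def)
  then have "(\<Sum>i\<in>robust_class 1 \<union> robust_class (-1). y i * perturbed i $ k) = ?S 1 - ?S (-1)"
    by (simp add: sum.union_disjoint finite_robust_class sum_negf robust_class_def)
  also have "\<dots> = (\<Sum>v\<in>col_vals N x k. v * Cp k v) - (\<Sum>v\<in>col_vals N x k. v * Cm k v)"
    by (simp add: sum_robust_class_perturbed class_estimate_def)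
  finally show "pseudo_grad lam N x b Cm Cp $ k = svm_grad lam N perturbed y b $ k"
    unfolding pseudo_grad_def svm_grad_def active_set_perturbed
    by (simp add: G_minus_plus_eq diff_divide_distrib)
qed

end

text \<open>The claim holds for an arbitrary sequence of iterates.\<close>

theorem lemma2:
  fixes x :: "nat \<Rightarrow> real^'d" and y :: "nat \<Rightarrow> real" and N :: nat
    and lam \<epsilon> :: real
    and \<beta> :: "nat \<Rightarrow> real^'d"
    and Chm Chp :: "nat \<Rightarrow> 'd \<Rightarrow> real \<Rightarrow> real"
  assumes eps: "0 < \<epsilon>" "\<epsilon> < 1"
    and lam: "lam > 0"
    and labels: "\<forall>i<N. y i = -1 \<or> y i = 1"
    and box: "\<forall>i<N. \<forall>j. \<bar>x i $ j\<bar> \<le> 1"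
    and approx_minus: "\<forall>t j v. v \<in> col_vals N x j \<longrightarrow>
                         approx \<epsilon> (Chm t j v) (real (C_minus \<epsilon> N x y (\<beta> t) j v))"
    and approx_plus: "\<forall>t j v. v \<in> col_vals N x j \<longrightarrow>
                         approx \<epsilon> (Chp t j v) (real (C_plus \<epsilon> N x y (\<beta> t) j v))"
    and init: "\<beta> 0 = 0"
    and step: "\<forall>t. \<beta> (Suc t) =
       closest_point (cball 0 (sqrt (real CARD('d)) / (2 * lam)))
         (\<beta> t - (1 / (lam * sqrt (real CARD('d) * real (Suc t)))) *\<^sub>R
                  pseudo_grad lam N x (\<beta> t) (Chm t) (Chp t))"
  shows "\<forall>t. \<exists>x' y'. perturbation \<epsilon> N x' y' x y \<and>
           pseudo_grad lam N x (\<beta> t) (Chm t) (Chp t) = svm_grad lam N x' y' (\<beta> t)"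
proof
  fix t
  interpret pseudo_gradient_step \<epsilon> N x y "\<beta> t" "Chm t" "Chp t"
    using eps labels approx_minus approx_plus by unfold_locales auto
  show "\<exists>x' y'. perturbation \<epsilon> N x' y' x y \<and>
          pseudo_grad lam N x (\<beta> t) (Chm t) (Chp t) = svm_grad lam N x' y' (\<beta> t)"
    using perturbation_perturbed pseudo_grad_eq_svm_grad_perturbed by blast
qed

end
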